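(* In the setting described in the context (Schrödinger equation with short-range potential, bases $(g_n,\bar g_n)$ on the classically allowed intervals, transfer matrices $T_n$, and the quantum walk on $[n_0]$ with coins $U_n:=\mathcal{M}(T_n)$), the scattering matrix of the Schrödinger equation coincides with that of the quantum walk: $\mathbb{S}_{\mathrm{QM}}=\mathbb{S}_{\mathrm{QW}}$.
   Context: Schrödinger side. Let $h>0$ and $P(h)=-h^2\frac{d^2}{dx^2}+V(x)$ on $\mathbb{R}$, with $V$ continuous, real-valued, and satisfying $|V(x)|\le C(1+|x|)^{-1-\epsilon}$ for some $C,\epsilon>0$. Fix $0<\lambda_0\le\lambda_1$ and $\lambda\in[\lambda_0,\lambda_1]$. The Jost solutions $J^\pm_{\mathrm{in}},J^\pm_{\mathrm{out}}$ of $(P-\lambda)\varphi=0$ are characterized by $e^{i\sqrt\lambda|x|/h}J^\pm_{\mathrm{in}}(x)\to1$, $e^{-i\sqrt\lambda|x|/h}J^\pm_{\mathrm{out}}(x)\to1$ as $x\to\pm\infty$. The scattering matrix $\mathbb{S}_{\mathrm{QM}}$ is the $2\times2$ matrix with $(J^+_{\mathrm{in}},J^-_{\mathrm{in}})=(J^-_{\mathrm{out}},J^+_{\mathrm{out}})\,\mathbb{S}_{\mathrm{QM}}$. The set $\{x: V(x)\ge\lambda_0\}$ is a finite union of closed intervals $K_n=[x_{2n-1},x_{2n}]$, $n=1,\dots,n_0$, with $x_1<x_2<\dots<x_{2n_0}$ and $n_0\ge2$; set $I_0=(-\infty,x_1)$, $I_n=(x_{2n},x_{2n+1})$ for $1\le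 n\le n_0-1$, $I_{n_0}=(x_{2n_0},\infty)$. For each $n=0,\dots,n_0$ let $g_n$ be a solution of $(P-\lambda)g=0$ on $\mathbb{R}$ (associated with $I_n$) such that $(g_n,\bar g_n)$ is a basis of solutions, with $g_0=J^-_{\mathrm{out}}$, $g_{n_0}=J^+_{\mathrm{in}}$, the Wronskian $\mathcal{W}(g_n,\bar g_n)$ independent of $n$, and $(g_{n-1},\bar g_n)$ linearly independent for each $n$. Define $T_n$ ($1\le n\le n_0$) by $(g_{n-1},\bar g_{n-1})T_n=(g_n,\bar g_n)$; then $T_n\in\mathcal{T}:=\{T=(t_{jk})\in SL(2,\mathbb{C}): t_{11}=\overline{t_{22}},\ t_{12}=\overline{t_{21}}\}$. Define $\mathcal{M}:\mathcal{T}\to\mathcal{S}:=\{M\in U(2): m_{11}=m_{22}\neq0\}$ by $\mathcal{M}\begin{pmatrix}p&\bar q\\ q&\bar p\end{pmatrix}=\frac1{\bar p}\begin{pmatrix}1&\bar q\\-q&1\end{pmatrix}$, and $U_n:=\mathcal{M}(T_n)$. Quantum walk on $[n_0]=\{1,\dots,n_0\}$. Set $P_n:=\begin{pmatrix}1&0\\0&0\end{pmatrix}U_n$, $Q_n:=\begin{pmatrix}0&0\\0&1\end{pmatrix}U_n$. A state $\Psi$ consists of $\Psi(n)=(\Psi_1(n),\Psi_2(n))^T\in\mathbb{C}^2$ for $1\le n\le n_0$ and scalars $\Psi(-\infty),\Psi(+\infty)\in\mathbb{C}$ (so the state space is $\mathbb{C}^{2n_0+2}$). The evolution $\mathcal{U}$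 is: $(\mathcal{U}\Psi)(n)=P_{n+1}\Psi(n+1)+Q_{n-1}\Psi(n-1)$ for $2\le n\le n_0-1$; $(\mathcal{U}\Psi)(-\infty)=(1,0)U_1\Psi(1)$; $(\mathcal{U}\Psi)(+\infty)=(0,1)U_{n_0}\Psi(n_0)$; $(\mathcal{U}\Psi)(1)=P_2\Psi(2)+(0,\Psi_2(1))^T$; $(\mathcal{U}\Psi)(n_0)=(\Psi_1(n_0),0)^T+Q_{n_0-1}\Psi(n_0-1)$. Let $\Psi^\pm_{\mathrm{in}},\Psi^\pm_{\mathrm{out}}$ be the (unique) states with $\mathcal{U}\Psi=\Psi$ and: $(\Psi^-_{\mathrm{in}})_2(1)=1,\ \Psi^-_{\mathrm{in}}(-\infty)=0$; $(\Psi^-_{\mathrm{out}})_2(1)=0,\ \Psi^-_{\mathrm{out}}(-\infty)=1$; $(\Psi^+_{\mathrm{in}})_1(n_0)=1,\ \Psi^+_{\mathrm{in}}(+\infty)=0$; $(\Psi^+_{\mathrm{out}})_1(n_0)=0,\ \Psi^+_{\mathrm{out}}(+\infty)=1$. The scattering matrix $\mathbb{S}_{\mathrm{QW}}$ is the $2\times2$ matrix with $(\Psi^+_{\mathrm{in}},\Psi^-_{\mathrm{in}})=(\Psi^-_{\mathrm{out}},\Psi^+_{\mathrm{out}})\,\mathbb{S}_{\mathrm{QW}}$. *)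

theory Defs
  imports "HOL-Analysis.Analysis"
begin

definition cnj_fun :: "(real \<Rightarrow> complex) \<Rightarrow> real \<Rightarrow> complex" where
  "cnj_fun f = (\<lambda>x. cnj (f x))"

text \<open>phi solves (P(h) - lam) phi = 0, i.e. -h^2 phi'' + V phi = lam phi on R.\<close>
definition is_sol :: "real \<Rightarrow> (real \<Rightarrow> real) \<Rightarrow> real \<Rightarrow> (real \<Rightarrow> complex) \<Rightarrow> bool" where
  "is_sol h V lam \<phi> \<longleftrightarrow>
     (\<exists>\<phi>'. \<forall>x. (\<phi> has_vector_derivative \<phi>' x) (at x) \<and>
        (\<phi>' has_vector_derivative (complex_of_real ((V x - lam) / h\<^sup>2) * \<phi> x)) (at x))"

definition sol_basis :: "real \<Rightarrow> (real \<Rightarrow> real) \<Rightarrow> real \<Rightarrow> (real \<Rightarrow> complex) \<Rightarrow> (real \<Rightarrow> complex) \<Rightarrow> bool" where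
  "sol_basis h V lam f g \<longleftrightarrow> is_sol h V lam f \<and> is_sol h V lam g \<and>
     (\<forall>y. is_sol h V lam y \<longrightarrow> (\<exists>!ab. y = (\<lambda>x. fst ab * f x + snd ab * g x)))"

definition lin_indep2 :: "(real \<Rightarrow> complex) \<Rightarrow> (real \<Rightarrow> complex) \<Rightarrow> bool" where
  "lin_indep2 f g \<longleftrightarrow> (\<forall>a b. (\<forall>x. a * f x + b * g x = 0) \<longrightarrow> a = 0 \<and> b = 0)"

definition wronskian :: "(real \<Rightarrow> complex) \<Rightarrow> (real \<Rightarrow> complex) \<Rightarrow> real \<Rightarrow> complex" where
  "wronskian f g x = f x * vector_derivative g (at x) - vector_derivative f (at x) * g x"

definition jost_in_plus :: "real \<Rightarrow> real \<Rightarrow> (real \<Rightarrow> complex) \<Rightarrow> bool" where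
  "jost_in_plus h lam J \<longleftrightarrow>
     ((\<lambda>x. exp (\<i> * complex_of_real (sqrt lam * \<bar>x\<bar> / h)) * J x) \<longlongrightarrow> 1) at_top"
definition jost_in_minus :: "real \<Rightarrow> real \<Rightarrow> (real \<Rightarrow> complex) \<Rightarrow> bool" where
  "jost_in_minus h lam J \<longleftrightarrow>
     ((\<lambda>x. exp (\<i> * complex_of_real (sqrt lam * \<bar>x\<bar> / h)) * J x) \<longlongrightarrow> 1) at_bot"
definition jost_out_plus :: "real \<Rightarrow> real \<Rightarrow> (real \<Rightarrow> complex) \<Rightarrow> bool" where
  "jost_out_plus h lam J \<longleftrightarrow>
     ((\<lambda>x. exp (- \<i> * complex_of_real (sqrt lam * \<bar>x\<bar> / h)) * J x) \<longlongrightarrow> 1) at_top"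
definition jost_out_minus :: "real \<Rightarrow> real \<Rightarrow> (real \<Rightarrow> complex) \<Rightarrow> bool" where
  "jost_out_minus h lam J \<longleftrightarrow>
     ((\<lambda>x. exp (- \<i> * complex_of_real (sqrt lam * \<bar>x\<bar> / h)) * J x) \<longlongrightarrow> 1) at_bot"

definition scat_QM :: "(real \<Rightarrow> complex) \<Rightarrow> (real \<Rightarrow> complex) \<Rightarrow> (real \<Rightarrow> complex) \<Rightarrow> (real \<Rightarrow> complex)
    \<Rightarrow> complex^2^2" where
  "scat_QM Jpin Jmin Jmout Jpout = (THE S::complex^2^2. \<forall>x.
     Jpin x = Jmout x * S$1$1 + Jpout x * S$2$1 \<and>
     Jmin x = Jmout x * S$1$2 + Jpout x * S$2$2)"

definition transfer_rel :: "(real \<Rightarrow> complex) \<Rightarrow> (real \<Rightarrow> complex) \<Rightarrow> complex^2^2 \<Rightarrow> bool" where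
  "transfer_rel gp gn T \<longleftrightarrow> (\<forall>x.
     gn x = gp x * T$1$1 + cnj (gp x) * T$2$1 \<and>
     cnj (gn x) = gp x * T$1$2 + cnj (gp x) * T$2$2)"

text \<open>The map M: [[p, conj q],[q, conj p]] to (1/conj p) [[1, conj q],[-q, 1]].\<close>
definition coinM :: "complex^2^2 \<Rightarrow> complex^2^2" where
  "coinM T = (let p = T$1$1; q = T$2$1 in
     (\<chi> i j. (1 / cnj p) *
        (if i = 1 \<and> j = 1 then 1 else if i = 1 \<and> j = 2 then cnj q
         else if i = 2 \<and> j = 1 then - q else 1)))"

definition projP :: "complex^2^2" where
  "projP = (\<chi> i j. if i = 1 \<and> j = 1 then 1 else 0)"
definition projQ :: "complex^2^2" where
  "projQ = (\<chi> i j. if i = 2 \<and> j = 2 then 1 else 0)"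

text \<open>Quantum walk states: cells Psi n for 1 <= n <= n0 (other indices are ignored),
  and the two scalars Psi(-infinity), Psi(+infinity).\<close>
record qw_state =
  cells :: "nat \<Rightarrow> complex^2"
  mInf :: complex
  pInf :: complex

definition vec2 :: "complex \<Rightarrow> complex \<Rightarrow> complex^2" where
  "vec2 a b = (\<chi> i. if i = 1 then a else b)"

definition qw_step :: "nat \<Rightarrow> (nat \<Rightarrow> complex^2^2) \<Rightarrow> qw_state \<Rightarrow> qw_state" where
  "qw_step n0 U \<Psi> = \<lparr>
     cells = (\<lambda>n.
       if n = 1 then (projP ** U 2) *v cells \<Psi> 2 + vec2 0 (cells \<Psi> 1 $ 2)
       else if n = n0 then vec2 (cells \<Psi> n0 $ 1) 0 + (projQ ** U (n0 - 1)) *v cells \<Psi> (n0 - 1)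
       else if 2 \<le> n \<and> n \<le> n0 - 1 then
         (projP ** U (n + 1)) *v cells \<Psi> (n + 1) + (projQ ** U (n - 1)) *v cells \<Psi> (n - 1)
       else 0),
     mInf = (U 1 *v cells \<Psi> 1) $ 1,
     pInf = (U n0 *v cells \<Psi> n0) $ 2 \<rparr>"

definition qw_fixed :: "nat \<Rightarrow> (nat \<Rightarrow> complex^2^2) \<Rightarrow> qw_state \<Rightarrow> bool" where
  "qw_fixed n0 U \<Psi> \<longleftrightarrow>
     (\<forall>n\<in>{1..n0}. cells (qw_step n0 U \<Psi>) n = cells \<Psi> n) \<and>
     mInf (qw_step n0 U \<Psi>) = mInf \<Psi> \<and> pInf (qw_step n0 U \<Psi>) = pInf \<Psi>"

definition scat_QW :: "nat \<Rightarrow> qw_state \<Rightarrow> qw_state \<Rightarrow> qw_state \<Rightarrow> qw_state \<Rightarrow> complex^2^2" where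
  "scat_QW n0 Ppin Pmin Pmout Ppout = (THE S::complex^2^2.
     (\<forall>n\<in>{1..n0}.
        cells Ppin n = S$1$1 *s cells Pmout n + S$2$1 *s cells Ppout n \<and>
        cells Pmin n = S$1$2 *s cells Pmout n + S$2$2 *s cells Ppout n) \<and>
     mInf Ppin = S$1$1 * mInf Pmout + S$2$1 * mInf Ppout \<and>
     mInf Pmin = S$1$2 * mInf Pmout + S$2$2 * mInf Ppout \<and>
     pInf Ppin = S$1$1 * pInf Pmout + S$2$1 * pInf Ppout \<and>
     pInf Pmin = S$1$2 * pInf Pmout + S$2$2 * pInf Ppout)"

end

theory Submission
  imports Defs
begin

text \<open>
  Both scattering matrices are the solution of one and the same linear system. Comparing with the
  phases exp(+/- i sqrt(lam) |x| / h) at infinity gives J+out = conj J+in and J-in = conj J-out,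
  and shows that the Wronskian of J-out and its conjugate does not vanish; as the Wronskians of all
  pairs (g n, conj (g n)) agree, every T n has determinant one and thus lies in SU(1,1).
  A fixed point of the walk, read on the edges between consecutive sites, is a sequence of amplitude
  vectors w 0, ..., w n0 with T n w n = w (n - 1), because the coin M(T n) is just the scattering form
  of T n. Hence w 0 are the coordinates in the basis (J-out, conj J-out) of the solution whose
  coordinates in (J+in, conj J+in) are w n0, and a fixed point is determined by w 0. Jost solutions
  and fixed points therefore have the same coordinates, and so do the linear relations defining the
  two scattering matrices.
\<close>

section \<open>Oscillating phases\<close>

lemma cis_not_convergent_at_top:
  fixes w :: real
  assumes "w \<noteq> 0"
  shows "\<not> ((\<lambda>x. cis (w * x)) \<longlongrightarrow> L) at_top"
proof
  assume L: "((\<lambda>x. cis (w * x)) \<longlongrightarrow> L) at_top"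
  have "filterlim (\<lambda>x. pi / w + x) at_top at_top"
    by (rule filterlim_tendsto_add_at_top[OF tendsto_const filterlim_ident])
  from filterlim_compose[OF L this] have "((\<lambda>x. cis (w * (pi / w + x))) \<longlongrightarrow> L) at_top"
    by (simp add: o_def)
  moreover have "cis (w * (pi / w + x)) = - cis (w * x)" for x
    using assms by (simp add: distrib_left cis_mult[symmetric])
  ultimately have "((\<lambda>x. - cis (w * x)) \<longlongrightarrow> L) at_top"
    by simp
  hence "((\<lambda>x. cis (w * x)) \<longlongrightarrow> - L) at_top"
    using tendsto_minus by fastforce
  with L have "L = - L"
    by (rule tendsto_unique[OF trivial_limit_at_top_linorder])
  moreover have "((\<lambda>x. norm (cis (w * x))) \<longlongrightarrow> norm L) at_top"
    using L by (rule tendsto_norm)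
  hence "norm L = 1"
    by (simp add: tendsto_const_iff)
  ultimately show False
    by simp
qed

lemma cis_abs_not_convergent:
  fixes w :: real
  assumes "w \<noteq> 0"
  shows "\<not> ((\<lambda>x. cis (w * \<bar>x\<bar>)) \<longlongrightarrow> L) at_top"
    and "\<not> ((\<lambda>x. cis (w * \<bar>x\<bar>)) \<longlongrightarrow> L) at_bot"
proof -
  have "eventually (\<lambda>x. cis (w * \<bar>x\<bar>) = cis (w * x)) at_top"
    "eventually (\<lambda>x. cis (w * \<bar>- x\<bar>) = cis (w * x)) at_top"
    using eventually_ge_at_top[of 0] by (eventually_elim, simp)+
  with cis_not_convergent_at_top[OF assms, of L]
  show "\<not> ((\<lambda>x. cis (w * \<bar>x\<bar>)) \<longlongrightarrow> L) at_top"
    and "\<not> ((\<lambda>x. cis (w * \<bar>x\<bar>)) \<longlongrightarrow> L) at_bot"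
    unfolding filterlim_at_bot_mirror by (simp_all add: tendsto_cong)
qed

lemma lin_comb_coeffs_from_asymptotics:
  fixes J K :: "real \<Rightarrow> complex" and \<theta> :: "real \<Rightarrow> real" and F :: "real filter"
  assumes "F \<noteq> bot"
    and J: "((\<lambda>x. cis (\<theta> x) * J x) \<longlongrightarrow> 1) F"
    and K: "((\<lambda>x. cis (- \<theta> x) * K x) \<longlongrightarrow> 1) F"
    and comb: "\<And>x. K x = a * J x + b * cnj (J x)"
    and osc: "\<And>L. \<not> ((\<lambda>x. cis (2 * \<theta> x)) \<longlongrightarrow> L) F"
  shows "a = 0 \<and> b = 1"
proof -
  define v where "v = (\<lambda>x. cis (\<theta> x) * J x)"
  have v: "(v \<longlongrightarrow> 1) F" and cnj_v: "((\<lambda>x. cnj (v x)) \<longlongrightarrow> 1) F"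
    using J tendsto_cnj[OF J] by (simp_all add: v_def)
  \<comment> \<open>In the frame of \<open>K\<close> the \<open>J\<close>-component rotates with phase \<open>-2\<theta>\<close>, the \<open>cnj J\<close>-component does not.\<close>
  have split: "cis (- \<theta> x) * K x = a * (cis (- 2 * \<theta> x) * v x) + b * cnj (v x)" for x
  proof -
    have "cis (- 2 * \<theta> x) * v x = cis (- \<theta> x) * J x"
      by (simp add: v_def mult.assoc[symmetric] cis_mult)
    moreover have "cnj (v x) = cis (- \<theta> x) * cnj (J x)"
      by (simp add: v_def cis_cnj)
    ultimately show ?thesis
      by (simp add: comb distrib_left mult.left_commute)
  qed
  have a: "a = 0"
  proof (rule ccontr)
    assume "a \<noteq> 0"
    have "((\<lambda>x. (cis (- \<theta> x) * K x - b * cnj (v x)) / (a * v x)) \<longlongrightarrow> (1 - b * 1) / (a * 1)) F"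
      using \<open>a \<noteq> 0\<close> by (intro tendsto_intros K cnj_v v) simp
    moreover have "eventually (\<lambda>x. v x \<noteq> 0) F"
      using tendsto_imp_eventually_ne[OF v] by simp
    hence "eventually (\<lambda>x. (cis (- \<theta> x) * K x - b * cnj (v x)) / (a * v x) = cis (- 2 * \<theta> x)) F"
      by eventually_elim (use \<open>a \<noteq> 0\<close> in \<open>simp add: split\<close>)
    ultimately have "((\<lambda>x. cis (- 2 * \<theta> x)) \<longlongrightarrow> (1 - b) / a) F"
      using tendsto_cong by fastforce
    from tendsto_cnj[OF this] osc show False
      by (simp add: cis_cnj)
  qed
  have "((\<lambda>x. b * cnj (v x)) \<longlongrightarrow> 1) F"
    using K by (simp add: split a)
  moreover have "((\<lambda>x. b * cnj (v x)) \<longlongrightarrow> b * 1) F"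
    by (intro tendsto_intros cnj_v)
  ultimately have "b = 1"
    using tendsto_unique[OF \<open>F \<noteq> bot\<close>] by fastforce
  with a show ?thesis
    by simp
qed

lemma ratio_conj_constant_if_wronskian_zero:
  fixes f f' :: "real \<Rightarrow> complex" and S :: "real set"
  assumes "convex S"
    and deriv: "\<And>x. x \<in> S \<Longrightarrow> (f has_vector_derivative f' x) (at x)"
    and nonzero: "\<And>x. x \<in> S \<Longrightarrow> f x \<noteq> 0"
    and wronskian: "\<And>x. x \<in> S \<Longrightarrow> wronskian f (cnj_fun f) x = 0"
  shows "\<exists>c. \<forall>x\<in>S. f x / cnj (f x) = c"
proof (rule has_derivative_zero_constant[OF \<open>convex S\<close>])
  fix x assume "x \<in> S"
  have d: "(f has_vector_derivative f' x) (at x)"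
    and dc: "(cnj_fun f has_vector_derivative cnj (f' x)) (at x)"
    using deriv[OF \<open>x \<in> S\<close>] by (auto simp: cnj_fun_def intro: has_vector_derivative_cnj)
  have w: "f x * cnj (f' x) = f' x * cnj (f x)"
    using wronskian[OF \<open>x \<in> S\<close>]
    unfolding wronskian_def vector_derivative_at[OF d] vector_derivative_at[OF dc]
    by (simp add: cnj_fun_def)
  have "((\<lambda>x. f x / cnj (f x)) has_derivative
      (\<lambda>t. (t *\<^sub>R f' x * cnj (f x) - f x * t *\<^sub>R cnj (f' x)) / (cnj (f x) * cnj (f x))))
      (at x within S)"
  proof (rule has_derivative_divide')
    show "(f has_derivative (\<lambda>t. t *\<^sub>R f' x)) (at x within S)"
      using d unfolding has_vector_derivative_def by (rule has_derivative_at_withinI)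
    show "((\<lambda>x. cnj (f x)) has_derivative (\<lambda>t. t *\<^sub>R cnj (f' x))) (at x within S)"
      using dc unfolding has_vector_derivative_def cnj_fun_def by (rule has_derivative_at_withinI)
  qed (use nonzero[OF \<open>x \<in> S\<close>] in simp)
  moreover have "t *\<^sub>R f' x * cnj (f x) - f x * t *\<^sub>R cnj (f' x)
      = of_real t * (f' x * cnj (f x) - f x * cnj (f' x))" for t
    by (simp add: scaleR_conv_of_real algebra_simps)
  ultimately show "((\<lambda>x. f x / cnj (f x)) has_derivative (\<lambda>t. 0)) (at x within S)"
    using w by simp
qed

lemma wronskian_conj_nonzero_if_asymptotic:
  fixes f :: "real \<Rightarrow> complex" and \<theta> :: "real \<Rightarrow> real"
  assumes deriv: "\<And>x. (f has_vector_derivative f' x) (at x)"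
    and lim: "((\<lambda>x. cis (\<theta> x) * f x) \<longlongrightarrow> 1) at_bot"
    and osc: "\<And>L. \<not> ((\<lambda>x. cis (2 * \<theta> x)) \<longlongrightarrow> L) at_bot"
  shows "\<exists>x. wronskian f (cnj_fun f) x \<noteq> 0"
proof (rule ccontr)
  assume "\<nexists>x. wronskian f (cnj_fun f) x \<noteq> 0"
  define v where "v = (\<lambda>x. cis (\<theta> x) * f x)"
  have v: "(v \<longlongrightarrow> 1) at_bot"
    using lim by (simp add: v_def)
  have "eventually (\<lambda>x. v x \<noteq> 0) at_bot"
    using tendsto_imp_eventually_ne[OF v] by simp
  then obtain a where a: "\<And>x. x \<le> a \<Longrightarrow> v x \<noteq> 0"
    unfolding eventually_at_bot_linorder by blast
  have f_nonzero: "f x \<noteq> 0" if "x \<le> a" for x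
    using a[OF that] by (simp add: v_def)
  then obtain c where c: "\<And>x. x \<le> a \<Longrightarrow> f x / cnj (f x) = c"
    using ratio_conj_constant_if_wronskian_zero[of "{..a}" f f'] deriv \<open>\<nexists>x. _\<close> by auto
  \<comment> \<open>A constant phase of \<open>f\<close> is incompatible with the rotating phase of \<open>cis \<theta>\<close>.\<close>
  have "eventually (\<lambda>x. cnj c * v x / cnj (v x) = cis (2 * \<theta> x)) at_bot"
    unfolding eventually_at_bot_linorder
  proof (intro exI allI impI)
    fix x assume "x \<le> a"
    have "cnj c = cnj (f x / cnj (f x))"
      using c[OF \<open>x \<le> a\<close>] by simp
    hence "cnj c * v x / cnj (v x) = cnj (f x) / f x * (cis (\<theta> x) * f x) / (cis (- \<theta> x) * cnj (f x))"
      by (simp add: v_def cis_cnj)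
    also have "\<dots> = cis (\<theta> x) / cis (- \<theta> x)"
      using f_nonzero[OF \<open>x \<le> a\<close>] by simp
    also have "\<dots> = cis (2 * \<theta> x)"
      by (simp add: cis_divide)
    finally show "cnj c * v x / cnj (v x) = cis (2 * \<theta> x)" .
  qed
  moreover have "((\<lambda>x. cnj c * v x / cnj (v x)) \<longlongrightarrow> cnj c * 1 / cnj 1) at_bot"
    by (intro tendsto_intros v) simp
  ultimately have "((\<lambda>x. cis (2 * \<theta> x)) \<longlongrightarrow> cnj c) at_bot"
    using tendsto_cong by fastforce
  with osc show False
    by blast
qed

section \<open>Jost solutions\<close>

lemma sol_basis_lin_indep2:
  assumes "sol_basis h V lam f g"
  shows "lin_indep2 f g"
  unfolding lin_indep2_def
proof (intro allI impI)
  fix a b assume comb: "\<forall>x. a * f x + b * g x = 0"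
  have "is_sol h V lam (\<lambda>x. 0)"
    unfolding is_sol_def by (rule exI[of _ "\<lambda>x. 0"]) simp
  with assms have "\<exists>!ab. (\<lambda>x. 0) = (\<lambda>x. fst ab * f x + snd ab * g x)"
    unfolding sol_basis_def by blast
  moreover have "(\<lambda>x. 0) = (\<lambda>x. fst (0, 0) * f x + snd (0, 0) * g x)"
    and "(\<lambda>x. 0) = (\<lambda>x. fst (a, b) * f x + snd (a, b) * g x)"
    using comb by auto
  ultimately have "(a, b) = (0, 0)"
    by blast
  then show "a = 0 \<and> b = 0"
    by simp
qed

lemma sol_basis_represents:
  assumes "sol_basis h V lam f g" and "is_sol h V lam y"
  obtains a b where "\<And>x. y x = a * f x + b * g x"
  using assms unfolding sol_basis_def by (metis (mono_tags))

lemma jost_conditions_cis: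
  "jost_in_plus h lam J \<longleftrightarrow> ((\<lambda>x. cis (sqrt lam / h * \<bar>x\<bar>) * J x) \<longlongrightarrow> 1) at_top"
  "jost_out_plus h lam J \<longleftrightarrow> ((\<lambda>x. cis (- (sqrt lam / h * \<bar>x\<bar>)) * J x) \<longlongrightarrow> 1) at_top"
  "jost_in_minus h lam J \<longleftrightarrow> ((\<lambda>x. cis (sqrt lam / h * \<bar>x\<bar>) * J x) \<longlongrightarrow> 1) at_bot"
  "jost_out_minus h lam J \<longleftrightarrow> ((\<lambda>x. cis (- (sqrt lam / h * \<bar>x\<bar>)) * J x) \<longlongrightarrow> 1) at_bot"
  unfolding jost_in_plus_def jost_out_plus_def jost_in_minus_def jost_out_minus_def cis_conv_exp
  by (simp_all add: mult.commute)

lemma jost_phase_oscillates: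
  assumes "h > 0" "lam > 0"
  shows "\<not> ((\<lambda>x. cis (2 * (sqrt lam / h * \<bar>x\<bar>))) \<longlongrightarrow> L) at_top"
    and "\<not> ((\<lambda>x. cis (2 * - (sqrt lam / h * \<bar>x\<bar>))) \<longlongrightarrow> L) at_bot"
proof -
  have "2 * (sqrt lam / h) \<noteq> 0"
    using assms by simp
  from cis_abs_not_convergent[OF this] cis_abs_not_convergent[of "- (2 * (sqrt lam / h))"] this
  show "\<not> ((\<lambda>x. cis (2 * (sqrt lam / h * \<bar>x\<bar>))) \<longlongrightarrow> L) at_top"
    and "\<not> ((\<lambda>x. cis (2 * - (sqrt lam / h * \<bar>x\<bar>))) \<longlongrightarrow> L) at_bot"
    unfolding mult.assoc mult_minus_left mult_minus_right by auto
qed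

lemma jost_out_plus_eq_cnj:
  assumes "h > 0" "lam > 0"
    and "sol_basis h V lam J (cnj_fun J)" "jost_in_plus h lam J"
    and "is_sol h V lam K" "jost_out_plus h lam K"
  shows "K = cnj_fun J"
proof -
  obtain a b where comb: "\<And>x. K x = a * J x + b * cnj (J x)"
    using sol_basis_represents[OF assms(3,5)] unfolding cnj_fun_def by blast
  have "a = 0 \<and> b = 1"
    using trivial_limit_at_top_linorder assms(4,6) comb jost_phase_oscillates(1)[OF assms(1,2)]
    unfolding jost_conditions_cis by (rule lin_comb_coeffs_from_asymptotics)
  with comb show ?thesis
    by (simp add: cnj_fun_def fun_eq_iff)
qed

lemma jost_in_minus_eq_cnj:
  assumes "h > 0" "lam > 0"
    and "sol_basis h V lam J (cnj_fun J)" "jost_out_minus h lam J"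
    and "is_sol h V lam K" "jost_in_minus h lam K"
  shows "K = cnj_fun J"
proof -
  obtain a b where comb: "\<And>x. K x = a * J x + b * cnj (J x)"
    using sol_basis_represents[OF assms(3,5)] unfolding cnj_fun_def by blast
  have "a = 0 \<and> b = 1"
  proof (rule lin_comb_coeffs_from_asymptotics[OF trivial_limit_at_bot_linorder _ _ comb])
    show "((\<lambda>x. cis (- (sqrt lam / h * \<bar>x\<bar>)) * J x) \<longlongrightarrow> 1) at_bot"
      using assms(4) unfolding jost_conditions_cis .
    show "((\<lambda>x. cis (- (- (sqrt lam / h * \<bar>x\<bar>))) * K x) \<longlongrightarrow> 1) at_bot"
      using assms(6) unfolding jost_conditions_cis minus_minus .
  qed (rule jost_phase_oscillates(2)[OF assms(1,2)])
  with comb show ?thesis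
    by (simp add: cnj_fun_def fun_eq_iff)
qed

lemma jost_out_minus_wronskian_nonzero:
  assumes "h > 0" "lam > 0" "is_sol h V lam J" "jost_out_minus h lam J"
  shows "\<exists>x. wronskian J (cnj_fun J) x \<noteq> 0"
proof -
  obtain J' where "\<And>x. (J has_vector_derivative J' x) (at x)"
    using assms(3) unfolding is_sol_def by blast
  then show ?thesis
    using assms(4) jost_phase_oscillates(2)[OF assms(1,2)] unfolding jost_conditions_cis
    by (rule wronskian_conj_nonzero_if_asymptotic)
qed

section \<open>Transfer matrices\<close>

definition in_SU11 :: "complex^2^2 \<Rightarrow> bool" where
  "in_SU11 T \<longleftrightarrow> T$1$2 = cnj (T$2$1) \<and> T$2$2 = cnj (T$1$1) \<and> det T = 1"

lemma transfer_rel_conj_entries: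
  assumes "lin_indep2 f (cnj_fun f)" "transfer_rel f g T"
  shows "T$1$2 = cnj (T$2$1) \<and> T$2$2 = cnj (T$1$1)"
proof -
  have "(T$1$2 - cnj (T$2$1)) * f x + (T$2$2 - cnj (T$1$1)) * cnj_fun f x = 0" for x
  proof -
    have g: "g x = f x * T$1$1 + cnj (f x) * T$2$1"
      and g_cnj: "cnj (g x) = f x * T$1$2 + cnj (f x) * T$2$2"
      using assms(2) unfolding transfer_rel_def by blast+
    have "(T$1$2 - cnj (T$2$1)) * f x + (T$2$2 - cnj (T$1$1)) * cnj (f x)
        = cnj (g x) - cnj (f x * T$1$1 + cnj (f x) * T$2$1)"
      unfolding g_cnj by (simp add: algebra_simps)
    then show ?thesis
      unfolding g[symmetric] by (simp add: cnj_fun_def)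
  qed
  with assms(1) have "T$1$2 - cnj (T$2$1) = 0 \<and> T$2$2 - cnj (T$1$1) = 0"
    unfolding lin_indep2_def by blast
  then show ?thesis
    by simp
qed

lemma wronskian_transfer_rel:
  assumes "transfer_rel f g T" "(f has_vector_derivative f') (at x)"
  shows "wronskian g (cnj_fun g) x = det T * wronskian f (cnj_fun f) x"
proof -
  have g_eq: "\<forall>y. g y = f y * T$1$1 + cnj (f y) * T$2$1"
    and gc_eq: "\<forall>y. cnj (g y) = f y * T$1$2 + cnj (f y) * T$2$2"
    using assms(1) unfolding transfer_rel_def by blast+
  have g: "g = (\<lambda>y. T$1$1 * f y + T$2$1 * cnj_fun f y)"
    using g_eq by (simp add: fun_eq_iff cnj_fun_def mult.commute)
  have gc: "cnj_fun g = (\<lambda>y. T$1$2 * f y + T$2$2 * cnj_fun f y)"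
    using gc_eq by (simp add: fun_eq_iff cnj_fun_def mult.commute)
  have df: "(f has_vector_derivative f') (at x)"
    and dfc: "(cnj_fun f has_vector_derivative cnj f') (at x)"
    using assms(2) unfolding cnj_fun_def by (auto intro: has_vector_derivative_cnj)
  have "((\<lambda>y. a * f y + b * cnj_fun f y) has_vector_derivative a * f' + b * cnj f') (at x)" for a b
    by (intro has_vector_derivative_add has_vector_derivative_mult_right df dfc)
  note D = vector_derivative_at[OF this]
  have "vector_derivative g (at x) = T$1$1 * f' + T$2$1 * cnj f'"
    unfolding g by (rule D)
  moreover have "vector_derivative (cnj_fun g) (at x) = T$1$2 * f' + T$2$2 * cnj f'"
    unfolding gc by (rule D)
  ultimately show ?thesis
    unfolding wronskian_def det_2 vector_derivative_at[OF df] vector_derivative_at[OF dfc]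
    unfolding gc unfolding g by (simp add: algebra_simps)
qed

lemma transfer_rel_in_SU11:
  assumes "lin_indep2 f (cnj_fun f)" "transfer_rel f g T" "(f has_vector_derivative f') (at x)"
    and "wronskian g (cnj_fun g) x = wronskian f (cnj_fun f) x" "wronskian f (cnj_fun f) x \<noteq> 0"
  shows "in_SU11 T"
proof -
  have "det T * wronskian f (cnj_fun f) x = 1 * wronskian f (cnj_fun f) x"
    using wronskian_transfer_rel[OF assms(2,3)] assms(4) by simp
  then have "det T = 1"
    using assms(5) by simp
  with transfer_rel_conj_entries[OF assms(1,2)] show ?thesis
    unfolding in_SU11_def by simp
qed

lemma in_SU11_det:
  assumes "in_SU11 T"
  shows "T$1$1 * cnj (T$1$1) - T$2$1 * cnj (T$2$1) = 1"
proof -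
  from assms have "T$1$2 = cnj (T$2$1)" "T$2$2 = cnj (T$1$1)" "det T = 1"
    unfolding in_SU11_def by blast+
  then show ?thesis
    unfolding det_2 by (simp add: mult.commute)
qed

lemma in_SU11_cnj_11_nonzero:
  assumes "in_SU11 T"
  shows "cnj (T$1$1) \<noteq> 0"
proof
  assume "cnj (T$1$1) = 0"
  with in_SU11_det[OF assms] have "Re (- (T$2$1 * cnj (T$2$1))) = 1"
    by simp
  then have "- ((Re (T$2$1))\<^sup>2 + (Im (T$2$1))\<^sup>2) = 1"
    by (simp add: power2_eq_square)
  then show False
    by (smt (verit) zero_le_power2)
qed

lemma in_SU11_invertible: "in_SU11 T \<Longrightarrow> invertible T"
  by (simp add: in_SU11_def invertible_det_nz)

lemma transfer_matrices_in_SU11: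
  fixes g :: "nat \<Rightarrow> real \<Rightarrow> complex" and n0 :: nat
  assumes basis: "\<forall>n\<le>n0. sol_basis h V lam (g n) (cnj_fun (g n))"
    and wronskian: "\<forall>n\<le>n0. \<forall>x. wronskian (g n) (cnj_fun (g n)) x = wronskian (g 0) (cnj_fun (g 0)) x"
    and nonzero: "wronskian (g 0) (cnj_fun (g 0)) x0 \<noteq> 0"
    and transfer: "\<forall>n\<in>{1..n0}. transfer_rel (g (n - 1)) (g n) (T n)"
  shows "\<forall>n\<in>{1..n0}. in_SU11 (T n)"
proof
  fix n assume n: "n \<in> {1..n0}"
  then have "n - 1 \<le> n0"
    by auto
  with basis have basis': "sol_basis h V lam (g (n - 1)) (cnj_fun (g (n - 1)))"
    by blast
  have "n \<le> n0"
    using n by simp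
  have W: "wronskian (g m) (cnj_fun (g m)) x0 = wronskian (g 0) (cnj_fun (g 0)) x0" if "m \<le> n0" for m
    using wronskian that by blast
  have "transfer_rel (g (n - 1)) (g n) (T n)"
    using transfer n by blast
  moreover have "is_sol h V lam (g (n - 1))"
    using basis' unfolding sol_basis_def by blast
  then obtain g' where "\<forall>x. (g (n - 1) has_vector_derivative g' x) (at x)"
    unfolding is_sol_def by blast
  moreover have "wronskian (g n) (cnj_fun (g n)) x0 = wronskian (g (n - 1)) (cnj_fun (g (n - 1))) x0"
    and "wronskian (g (n - 1)) (cnj_fun (g (n - 1))) x0 \<noteq> 0"
    using W[OF \<open>n \<le> n0\<close>] W[OF \<open>n - 1 \<le> n0\<close>] nonzero by simp_all
  ultimately show "in_SU11 (T n)"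
    using transfer_rel_in_SU11[OF sol_basis_lin_indep2[OF basis']] by blast
qed

section \<open>Transfer chains\<close>

lemma vec2_nth [simp]: "vec2 a b $ 1 = a" "vec2 a b $ 2 = b"
  by (simp_all add: vec2_def)

lemma vec_eq_2_iff: "u = v \<longleftrightarrow> u $ 1 = v $ 1 \<and> u $ 2 = (v :: complex^2) $ 2"
  by (simp add: vec_eq_iff forall_2)

lemma vec2_eta: "vec2 (v$1) (v$2) = v"
  by (simp add: vec_eq_2_iff)

lemma matrix_vector_mult_2_nth:
  fixes T :: "'a::semiring_1^2^2"
  shows "(T *v v) $ 1 = T$1$1 * v$1 + T$1$2 * v$2" "(T *v v) $ 2 = T$2$1 * v$1 + T$2$2 * v$2"
  by (simp_all add: matrix_vector_mult_def sum_2)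

definition lin_comb2 :: "complex^2 \<Rightarrow> (real \<Rightarrow> complex) \<Rightarrow> (real \<Rightarrow> complex) \<Rightarrow> real \<Rightarrow> complex" where
  "lin_comb2 u f g = (\<lambda>x. u$1 * f x + u$2 * g x)"

lemma lin_comb2_unit_vectors [simp]:
  "lin_comb2 (vec2 1 0) f g = f" "lin_comb2 (vec2 0 1) f g = g"
  by (simp_all add: lin_comb2_def)

lemma lin_comb2_combination:
  "lin_comb2 (a *s u + b *s v) f g x = a * lin_comb2 u f g x + b * lin_comb2 v f g x"
  by (simp add: lin_comb2_def algebra_simps)

lemma lin_comb2_eq_iff:
  assumes "lin_indep2 f g"
  shows "lin_comb2 u f g = lin_comb2 v f g \<longleftrightarrow> u = v"
proof
  assume "lin_comb2 u f g = lin_comb2 v f g"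
  then have "\<forall>x. (u$1 - v$1) * f x + (u$2 - v$2) * g x = 0"
    by (simp add: lin_comb2_def fun_eq_iff algebra_simps)
  with assms have "u$1 - v$1 = 0 \<and> u$2 - v$2 = 0"
    unfolding lin_indep2_def by blast
  then show "u = v"
    by (simp add: vec_eq_2_iff[of u])
qed simp

lemma lin_comb2_transfer_rel:
  assumes "transfer_rel f g T"
  shows "lin_comb2 (T *v u) f (cnj_fun f) = lin_comb2 u g (cnj_fun g)"
proof
  fix x
  have g: "g x = f x * T$1$1 + cnj (f x) * T$2$1"
    and gc: "cnj (g x) = f x * T$1$2 + cnj (f x) * T$2$2"
    using assms unfolding transfer_rel_def by blast+
  show "lin_comb2 (T *v u) f (cnj_fun f) x = lin_comb2 u g (cnj_fun g) x"
    unfolding lin_comb2_def cnj_fun_def matrix_vector_mult_2_nth gc unfolding g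
    by (simp add: algebra_simps)
qed

definition transfer_chain :: "nat \<Rightarrow> (nat \<Rightarrow> complex^2^2) \<Rightarrow> (nat \<Rightarrow> complex^2) \<Rightarrow> bool" where
  "transfer_chain n0 T w \<longleftrightarrow> (\<forall>n\<in>{1..n0}. T n *v w n = w (n - 1))"

lemma transfer_chain_lin_comb2:
  fixes g :: "nat \<Rightarrow> real \<Rightarrow> complex"
  assumes "transfer_chain n0 T w" "\<forall>n\<in>{1..n0}. transfer_rel (g (n - 1)) (g n) (T n)"
  shows "n \<le> n0 \<Longrightarrow> lin_comb2 (w 0) (g 0) (cnj_fun (g 0)) = lin_comb2 (w n) (g n) (cnj_fun (g n))"
proof (induction n)
  case (Suc n)
  then have "Suc n \<in> {1..n0}"
    by simp
  with assms have "T (Suc n) *v w (Suc n) = w (Suc n - 1)"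
    and "transfer_rel (g (Suc n - 1)) (g (Suc n)) (T (Suc n))"
    unfolding transfer_chain_def by blast+
  with Suc show ?case
    by (simp add: lin_comb2_transfer_rel[symmetric])
qed simp

lemma transfer_chain_combination:
  assumes "transfer_chain n0 T w" "transfer_chain n0 T w'"
  shows "transfer_chain n0 T (\<lambda>n. a *s w n + b *s w' n)"
  using assms by (simp add: transfer_chain_def matrix_vector_right_distrib vector_scalar_commute)

lemma transfer_chain_unique:
  assumes "\<forall>n\<in>{1..n0}. invertible (T n)" "transfer_chain n0 T w" "transfer_chain n0 T w'" "w 0 = w' 0"
  shows "n \<le> n0 \<Longrightarrow> w n = w' n"
proof (induction n)
  case (Suc n)
  then have "Suc n \<in> {1..n0}"
    by simp
  with assms(2,3) have "T (Suc n) *v w (Suc n) = w (Suc n - 1)" "T (Suc n) *v w' (Suc n) = w' (Suc n - 1)"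
    unfolding transfer_chain_def by blast+
  have "inj ((*v) (T (Suc n)))"
    using assms(1) \<open>Suc n \<in> {1..n0}\<close> by (simp add: inj_matrix_vector_mult)
  moreover from Suc \<open>T (Suc n) *v w (Suc n) = w (Suc n - 1)\<close> \<open>T (Suc n) *v w' (Suc n) = w' (Suc n - 1)\<close>
  have "T (Suc n) *v w (Suc n) = T (Suc n) *v w' (Suc n)"
    by simp
  ultimately show ?case
    by (rule injD)
qed (use assms(4) in simp)

section \<open>Fixed points of the quantum walk\<close>

lemma coinM_scattering:
  assumes "in_SU11 T" "coinM T *v vec2 a b' = vec2 a' b"
  shows "T *v vec2 a b = vec2 a' b'"
proof -
  define p q where "p = T$1$1" and "q = T$2$1"
  have p: "cnj p \<noteq> 0" and det: "p * cnj p - q * cnj q = 1"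
    using in_SU11_cnj_11_nonzero[OF assms(1)] in_SU11_det[OF assms(1)] by (simp_all add: p_def q_def)
  have entries: "T$1$2 = cnj q" "T$2$2 = cnj p"
    using assms(1) by (simp_all add: in_SU11_def p_def q_def)
  have "(a + cnj q * b') / cnj p = a'" "(- q * a + b') / cnj p = b"
    using assms(2) unfolding vec_eq_2_iff[of "coinM T *v _"]
    by (simp_all add: coinM_def Let_def matrix_vector_mult_2_nth p_def q_def add_divide_distrib diff_divide_distrib)
  then have b': "b' = q * a + cnj p * b" and "a' * cnj p = a + cnj q * b'"
    using p by (simp_all add: field_simps)
  then have "a' * cnj p = (p * a + cnj q * b) * cnj p"
    using det by (simp add: algebra_simps)
  with p have "a' = p * a + cnj q * b"
    by simp
  with b' show ?thesis
    by (simp add: vec_eq_2_iff matrix_vector_mult_2_nth entries p_def q_def)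
qed

text \<open>The amplitudes on the edge between the sites \<open>n\<close> and \<open>n + 1\<close>, where the edges \<open>0\<close> and \<open>n0\<close>
  lead to \<open>-\<infinity>\<close> and \<open>+\<infinity>\<close>: the left-moving one (component 1 of cell \<open>n\<close>) and the right-moving one
  (component 2 of cell \<open>n + 1\<close>).\<close>
definition qw_edge :: "nat \<Rightarrow> qw_state \<Rightarrow> nat \<Rightarrow> complex^2" where
  "qw_edge n0 \<Psi> n = vec2 (if n = 0 then mInf \<Psi> else cells \<Psi> n $ 1)
                          (if n = n0 then pInf \<Psi> else cells \<Psi> (Suc n) $ 2)"

lemma cells_eq_qw_edge:
  assumes "n \<in> {1..n0}"
  shows "cells \<Psi> n = vec2 (qw_edge n0 \<Psi> n $ 1) (qw_edge n0 \<Psi> (n - 1) $ 2)"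
proof -
  have "n \<noteq> 0" "n - 1 \<noteq> n0" "Suc (n - 1) = n"
    using assms by auto
  then show ?thesis
    by (simp add: qw_edge_def vec_eq_2_iff[of "cells \<Psi> n"])
qed

lemma proj_mult_nth:
  "((projP ** M) *v v) $ 1 = (M *v v) $ 1" "((projP ** M) *v v) $ 2 = 0"
  "((projQ ** M) *v v) $ 1 = 0" "((projQ ** M) *v v) $ 2 = (M *v v) $ 2"
  by (simp_all add: projP_def projQ_def matrix_vector_mult_def matrix_matrix_mult_def sum_2)

lemma qw_step_cells_nth:
  assumes "n0 \<ge> 2" "n \<in> {1..n0}"
  shows "cells (qw_step n0 U \<Psi>) n $ 1
           = (if n = n0 then cells \<Psi> n0 $ 1 else (U (Suc n) *v cells \<Psi> (Suc n)) $ 1)"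
    and "cells (qw_step n0 U \<Psi>) n $ 2
           = (if n = 1 then cells \<Psi> 1 $ 2 else (U (n - 1) *v cells \<Psi> (n - 1)) $ 2)"
  using assms by (auto simp: qw_step_def proj_mult_nth numeral_2_eq_2)

lemma qw_fixed_scattering:
  assumes "qw_fixed n0 U \<Psi>" "n0 \<ge> 2" "n \<in> {1..n0}"
  shows "U n *v cells \<Psi> n = vec2 (qw_edge n0 \<Psi> (n - 1) $ 1) (qw_edge n0 \<Psi> n $ 2)"
proof -
  have fixed: "\<And>m. m \<in> {1..n0} \<Longrightarrow> cells (qw_step n0 U \<Psi>) m = cells \<Psi> m"
    and "mInf \<Psi> = (U 1 *v cells \<Psi> 1) $ 1" "pInf \<Psi> = (U n0 *v cells \<Psi> n0) $ 2"
    using assms(1) unfolding qw_fixed_def by (auto simp: qw_step_def)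
  moreover have "n - 1 \<in> {1..n0}" "n - 1 \<noteq> n0" if "n \<noteq> 1"
    using that assms(3) by auto
  moreover have "Suc n \<in> {1..n0}" "Suc n \<noteq> 1" if "n \<noteq> n0"
    using that assms(3) by auto
  ultimately show ?thesis
    using assms(2,3) qw_step_cells_nth[OF assms(2), of "n - 1" U \<Psi>] qw_step_cells_nth[OF assms(2), of "Suc n" U \<Psi>]
    by (auto simp: vec_eq_2_iff[of "U n *v _"] qw_edge_def)
qed

lemma qw_fixed_transfer_chain:
  assumes "qw_fixed n0 (\<lambda>n. coinM (T n)) \<Psi>" "n0 \<ge> 2" "\<forall>n\<in>{1..n0}. in_SU11 (T n)"
  shows "transfer_chain n0 T (qw_edge n0 \<Psi>)"
  unfolding transfer_chain_def
proof
  fix n assume n: "n \<in> {1..n0}"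
  have "coinM (T n) *v vec2 (qw_edge n0 \<Psi> n $ 1) (qw_edge n0 \<Psi> (n - 1) $ 2)
      = vec2 (qw_edge n0 \<Psi> (n - 1) $ 1) (qw_edge n0 \<Psi> n $ 2)"
    using qw_fixed_scattering[OF assms(1,2) n] unfolding cells_eq_qw_edge[OF n] .
  from coinM_scattering[OF _ this] show "T n *v qw_edge n0 \<Psi> n = qw_edge n0 \<Psi> (n - 1)"
    using assms(3) n by (simp add: vec2_eta)
qed

definition qw_lin_comb :: "nat \<Rightarrow> complex \<Rightarrow> qw_state \<Rightarrow> complex \<Rightarrow> qw_state \<Rightarrow> qw_state \<Rightarrow> bool" where
  "qw_lin_comb n0 a \<Phi> b \<Phi>' \<Psi> \<longleftrightarrow>
     (\<forall>n\<in>{1..n0}. cells \<Psi> n = a *s cells \<Phi> n + b *s cells \<Phi>' n) \<and>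
     mInf \<Psi> = a * mInf \<Phi> + b * mInf \<Phi>' \<and> pInf \<Psi> = a * pInf \<Phi> + b * pInf \<Phi>'"

lemma qw_lin_comb_iff_edges:
  "qw_lin_comb n0 a \<Phi> b \<Phi>' \<Psi> \<longleftrightarrow>
     (\<forall>n\<le>n0. qw_edge n0 \<Psi> n = a *s qw_edge n0 \<Phi> n + b *s qw_edge n0 \<Phi>' n)"
proof
  assume comb: "qw_lin_comb n0 a \<Phi> b \<Phi>' \<Psi>"
  show "\<forall>n\<le>n0. qw_edge n0 \<Psi> n = a *s qw_edge n0 \<Phi> n + b *s qw_edge n0 \<Phi>' n"
  proof (intro allI impI)
    fix n assume "n \<le> n0"
    then have "n \<noteq> 0 \<Longrightarrow> n \<in> {1..n0}" "n \<noteq> n0 \<Longrightarrow> Suc n \<in> {1..n0}"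
      by auto
    with comb show "qw_edge n0 \<Psi> n = a *s qw_edge n0 \<Phi> n + b *s qw_edge n0 \<Phi>' n"
      unfolding qw_lin_comb_def by (auto simp: qw_edge_def vec_eq_2_iff)
  qed
next
  assume edges: "\<forall>n\<le>n0. qw_edge n0 \<Psi> n = a *s qw_edge n0 \<Phi> n + b *s qw_edge n0 \<Phi>' n"
  have "cells \<Psi> n = a *s cells \<Phi> n + b *s cells \<Phi>' n" if "n \<in> {1..n0}" for n
  proof -
    have "n \<le> n0" "n - 1 \<le> n0"
      using that by auto
    with edges show ?thesis
      unfolding cells_eq_qw_edge[OF that] by (simp add: vec_eq_2_iff)
  qed
  moreover have "mInf \<Psi> = a * mInf \<Phi> + b * mInf \<Phi>'" "pInf \<Psi> = a * pInf \<Phi> + b * pInf \<Phi>'"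
    using edges[rule_format, of 0] edges[rule_format, of n0] by (simp_all add: qw_edge_def vec_eq_2_iff)
  ultimately show "qw_lin_comb n0 a \<Phi> b \<Phi>' \<Psi>"
    unfolding qw_lin_comb_def by blast
qed

lemma qw_fixed_lin_comb_iff:
  assumes "n0 \<ge> 2" "\<forall>n\<in>{1..n0}. in_SU11 (T n)"
    and "qw_fixed n0 (\<lambda>n. coinM (T n)) \<Phi>" "qw_fixed n0 (\<lambda>n. coinM (T n)) \<Phi>'"
    and "qw_fixed n0 (\<lambda>n. coinM (T n)) \<Psi>"
  shows "qw_lin_comb n0 a \<Phi> b \<Phi>' \<Psi> \<longleftrightarrow> qw_edge n0 \<Psi> 0 = a *s qw_edge n0 \<Phi> 0 + b *s qw_edge n0 \<Phi>' 0"
  unfolding qw_lin_comb_iff_edges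
proof (intro iffI allI impI)
  assume "qw_edge n0 \<Psi> 0 = a *s qw_edge n0 \<Phi> 0 + b *s qw_edge n0 \<Phi>' 0"
  moreover have "\<forall>n\<in>{1..n0}. invertible (T n)"
    using assms(2) by (simp add: in_SU11_invertible)
  moreover note chain = qw_fixed_transfer_chain[OF _ assms(1,2)]
  ultimately show "qw_edge n0 \<Psi> n = a *s qw_edge n0 \<Phi> n + b *s qw_edge n0 \<Phi>' n" if "n \<le> n0" for n
    using transfer_chain_unique[OF _ chain[OF assms(5)] transfer_chain_combination[OF chain[OF assms(3)] chain[OF assms(4)]]]
      that by blast
qed simp

lemma qw_fixed_edges_lin_comb2:
  fixes g :: "nat \<Rightarrow> real \<Rightarrow> complex"
  assumes "qw_fixed n0 (\<lambda>n. coinM (T n)) \<Psi>" "n0 \<ge> 2" "\<forall>n\<in>{1..n0}. in_SU11 (T n)"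
    and "\<forall>n\<in>{1..n0}. transfer_rel (g (n - 1)) (g n) (T n)"
  shows "lin_comb2 (qw_edge n0 \<Psi> 0) (g 0) (cnj_fun (g 0)) = lin_comb2 (qw_edge n0 \<Psi> n0) (g n0) (cnj_fun (g n0))"
  using transfer_chain_lin_comb2[OF qw_fixed_transfer_chain[OF assms(1-3)] assms(4)] by simp

section \<open>Scattering matrices\<close>

definition scat_coeffs :: "complex^2 \<Rightarrow> complex^2 \<Rightarrow> complex^2 \<Rightarrow> complex^2 \<Rightarrow> complex^2^2" where
  "scat_coeffs u1 u2 u3 u4 = (THE S. u1 = S$1$1 *s u3 + S$2$1 *s u4 \<and> u2 = S$1$2 *s u3 + S$2$2 *s u4)"

lemma scat_QW_eq_scat_coeffs:
  assumes "n0 \<ge> 2" "\<forall>n\<in>{1..n0}. in_SU11 (T n)"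
    and "qw_fixed n0 (\<lambda>n. coinM (T n)) \<Psi>1" "qw_fixed n0 (\<lambda>n. coinM (T n)) \<Psi>2"
    and "qw_fixed n0 (\<lambda>n. coinM (T n)) \<Psi>3" "qw_fixed n0 (\<lambda>n. coinM (T n)) \<Psi>4"
  shows "scat_QW n0 \<Psi>1 \<Psi>2 \<Psi>3 \<Psi>4
      = scat_coeffs (qw_edge n0 \<Psi>1 0) (qw_edge n0 \<Psi>2 0) (qw_edge n0 \<Psi>3 0) (qw_edge n0 \<Psi>4 0)"
proof -
  have "scat_QW n0 \<Psi>1 \<Psi>2 \<Psi>3 \<Psi>4
      = (THE S. qw_lin_comb n0 (S$1$1) \<Psi>3 (S$2$1) \<Psi>4 \<Psi>1 \<and> qw_lin_comb n0 (S$1$2) \<Psi>3 (S$2$2) \<Psi>4 \<Psi>2)"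
    unfolding scat_QW_def qw_lin_comb_def by (rule arg_cong[where f = The]) (auto simp: fun_eq_iff)
  then show ?thesis
    unfolding scat_coeffs_def qw_fixed_lin_comb_iff[OF assms(1,2,5,6,3)] qw_fixed_lin_comb_iff[OF assms(1,2,5,6,4)]
    by simp
qed

lemma scat_QM_eq_scat_coeffs:
  assumes "lin_indep2 f g"
    and "J1 = lin_comb2 u1 f g" "J2 = lin_comb2 u2 f g" "J3 = lin_comb2 u3 f g" "J4 = lin_comb2 u4 f g"
  shows "scat_QM J1 J2 J3 J4 = scat_coeffs u1 u2 u3 u4"
proof -
  have comb: "(\<forall>x. lin_comb2 u f g x = J3 x * a + J4 x * b) \<longleftrightarrow> u = a *s u3 + b *s u4" for u a b
  proof -
    have "(\<forall>x. lin_comb2 u f g x = J3 x * a + J4 x * b)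
        \<longleftrightarrow> lin_comb2 u f g = lin_comb2 (a *s u3 + b *s u4) f g"
      unfolding assms(4,5) fun_eq_iff lin_comb2_combination by (simp add: mult.commute)
    with lin_comb2_eq_iff[OF assms(1)] show ?thesis
      by simp
  qed
  show ?thesis
    unfolding scat_QM_def scat_coeffs_def assms(2,3) comb[symmetric] by meson
qed

theorem mainTheorem3:
  fixes h lam lam0 lam1 C eps :: real
    and V :: "real \<Rightarrow> real"
    and n0 :: nat
    and xs :: "nat \<Rightarrow> real"
    and Jpin Jmin Jpout Jmout :: "real \<Rightarrow> complex"
    and g :: "nat \<Rightarrow> real \<Rightarrow> complex"
    and T :: "nat \<Rightarrow> complex^2^2"
    and Ppin Pmin Ppout Pmout :: qw_state
  assumes h_pos: "h > 0"
    and V_cont: "continuous_on UNIV V"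
    and C_pos: "C > 0" and eps_pos: "eps > 0"
    and V_decay: "\<forall>x. \<bar>V x\<bar> \<le> C * (1 + \<bar>x\<bar>) powr (- 1 - eps)"
    and lam_range: "0 < lam0" "lam0 \<le> lam1" "lam0 \<le> lam" "lam \<le> lam1"
    and J_pin: "is_sol h V lam Jpin" "jost_in_plus h lam Jpin"
    and J_min: "is_sol h V lam Jmin" "jost_in_minus h lam Jmin"
    and J_pout: "is_sol h V lam Jpout" "jost_out_plus h lam Jpout"
    and J_mout: "is_sol h V lam Jmout" "jost_out_minus h lam Jmout"
    and n0_ge: "n0 \<ge> 2"
    and xs_mono: "strict_mono_on {1..2 * n0} xs"
    and wells: "{x. lam0 \<le> V x} = (\<Union>n\<in>{1..n0}. {xs (2 * n - 1) .. xs (2 * n)})"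
    and g_basis: "\<forall>n\<le>n0. sol_basis h V lam (g n) (cnj_fun (g n))"
    and g_first: "g 0 = Jmout" and g_last: "g n0 = Jpin"
    and g_wronsk: "\<forall>n\<le>n0. \<forall>x. wronskian (g n) (cnj_fun (g n)) x
                                 = wronskian (g 0) (cnj_fun (g 0)) x"
    and g_indep: "\<forall>n\<in>{1..n0}. lin_indep2 (g (n - 1)) (cnj_fun (g n))"
    and T_def: "\<forall>n\<in>{1..n0}. transfer_rel (g (n - 1)) (g n) (T n)"
    and Pmin: "qw_fixed n0 (\<lambda>n. coinM (T n)) Pmin" "cells Pmin 1 $ 2 = 1" "mInf Pmin = 0"
    and Pmout: "qw_fixed n0 (\<lambda>n. coinM (T n)) Pmout" "cells Pmout 1 $ 2 = 0" "mInf Pmout = 1"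
    and Ppin: "qw_fixed n0 (\<lambda>n. coinM (T n)) Ppin" "cells Ppin n0 $ 1 = 1" "pInf Ppin = 0"
    and Ppout: "qw_fixed n0 (\<lambda>n. coinM (T n)) Ppout" "cells Ppout n0 $ 1 = 0" "pInf Ppout = 1"
  shows "scat_QM Jpin Jmin Jmout Jpout = scat_QW n0 Ppin Pmin Pmout Ppout"
proof -
  have "lam > 0"
    using lam_range by linarith
  have basis: "sol_basis h V lam Jmout (cnj_fun Jmout)" "sol_basis h V lam Jpin (cnj_fun Jpin)"
    using g_basis g_first g_last by auto
  have Jpout: "Jpout = cnj_fun Jpin"
    using jost_out_plus_eq_cnj[OF h_pos \<open>lam > 0\<close> basis(2) J_pin(2) J_pout] .
  have Jmin: "Jmin = cnj_fun Jmout"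
    using jost_in_minus_eq_cnj[OF h_pos \<open>lam > 0\<close> basis(1) J_mout(2) J_min] .
  obtain x0 where "wronskian (g 0) (cnj_fun (g 0)) x0 \<noteq> 0"
    using jost_out_minus_wronskian_nonzero[OF h_pos \<open>lam > 0\<close> J_mout] g_first by blast
  then have SU11: "\<forall>n\<in>{1..n0}. in_SU11 (T n)"
    using transfer_matrices_in_SU11[OF g_basis g_wronsk _ T_def] by blast
  note edges = qw_fixed_edges_lin_comb2[OF _ n0_ge SU11 T_def, unfolded g_first g_last]
  have "qw_edge n0 Ppin n0 = vec2 1 0" "qw_edge n0 Ppout n0 = vec2 0 1"
    "qw_edge n0 Pmout 0 = vec2 1 0" "qw_edge n0 Pmin 0 = vec2 0 1"
    using n0_ge Ppin Ppout Pmout Pmin by (simp_all add: qw_edge_def)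
  with edges[OF Ppin(1)] edges[OF Ppout(1)]
  have "Jpin = lin_comb2 (qw_edge n0 Ppin 0) Jmout (cnj_fun Jmout)"
    and "Jmin = lin_comb2 (qw_edge n0 Pmin 0) Jmout (cnj_fun Jmout)"
    and "Jmout = lin_comb2 (qw_edge n0 Pmout 0) Jmout (cnj_fun Jmout)"
    and "Jpout = lin_comb2 (qw_edge n0 Ppout 0) Jmout (cnj_fun Jmout)"
    unfolding Jpout Jmin by simp_all
  from scat_QM_eq_scat_coeffs[OF sol_basis_lin_indep2[OF basis(1)] this]
  have "scat_QM Jpin Jmin Jmout Jpout
      = scat_coeffs (qw_edge n0 Ppin 0) (qw_edge n0 Pmin 0) (qw_edge n0 Pmout 0) (qw_edge n0 Ppout 0)" .
  also have "\<dots> = scat_QW n0 Ppin Pmin Pmout Ppout"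
    using scat_QW_eq_scat_coeffs[OF n0_ge SU11 Ppin(1) Pmin(1) Pmout(1) Ppout(1)] ..
  finally show ?thesis .
qed

end
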